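(* Let $p$ be a prime and let $m$ be an integer. Let $G$ be a vector space over the field $\mathbb{F}_p$ of dimension $d \geq 3$, and let $S$ be a subset of $G$ such that $|S \cap H| \geq mp^{d-2}$ for each vector hyperplane $H$ (that is, each linear subspace of dimension $d - 1$) of $G$. Then $|S| \geq mp^{d-1}$. *)

theory Defs
  imports "HOL-Analysis.Analysis"
begin

end

theory Submission
  imports Defs
begin

(* Work in coordinates: hyperplanes are the kernels of the nonzero functionals c, and two
   functionals c, e with e not a multiple of c cut out a subspace W of codimension 2.
   The p + 1 hyperplanes through W cover each point outside W once and each point of W
   p + 1 times, so if every hyperplane meets S in at least p K points, then
   (p + 1) p K <= |S| + p |S \<inter> W|.  Hence |S| >= p^2 K unless every such W meets S in more
   than K points, and that is impossible: a nonzero point lies on at most a 1/p^2 fraction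
   of the W's, so by double counting |S \<inter> W| <= 1 + |S| / p^2 < K + 1 on average.
   The theorem is the case K = m p^(d-3). *)

definition coord_space :: "'b set \<Rightarrow> ('b \<Rightarrow> 'k::zero) set" where
  "coord_space B = {f. \<forall>b. b \<notin> B \<longrightarrow> f b = 0}"

definition dot :: "'b set \<Rightarrow> ('b \<Rightarrow> 'k::comm_semiring_0) \<Rightarrow> ('b \<Rightarrow> 'k) \<Rightarrow> 'k" where
  "dot B c y = (\<Sum>b\<in>B. c b * y b)"

definition annihilator :: "'b set \<Rightarrow> ('b \<Rightarrow> 'k::comm_semiring_0) \<Rightarrow> ('b \<Rightarrow> 'k) set" where
  "annihilator B y = {c \<in> coord_space B. dot B c y = 0}"

definition scalar_multiples :: "('b \<Rightarrow> 'k::times) \<Rightarrow> ('b \<Rightarrow> 'k) set" where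
  "scalar_multiples c = range (\<lambda>l b. l * c b)"

definition independent_pairs :: "('b \<Rightarrow> 'k::{zero,times}) set \<Rightarrow> (('b \<Rightarrow> 'k) \<times> ('b \<Rightarrow> 'k)) set" where
  "independent_pairs K = Sigma (K - {\<lambda>_. 0}) (\<lambda>c. K - scalar_multiples c)"

lemma bij_betw_restrict_coord_space:
  "bij_betw (\<lambda>f. restrict f B) (coord_space B) (B \<rightarrow>\<^sub>E UNIV)"
proof (rule bij_betw_byWitness[where f' = "\<lambda>g b. if b \<in> B then g b else 0"])
qed (auto simp: coord_space_def fun_eq_iff PiE_def extensional_def)

lemma
  fixes B :: "'b set"
  assumes "finite B"
  shows finite_coord_space: "finite (coord_space B :: ('b \<Rightarrow> 'k::{zero,finite}) set)"
    and card_coord_space: "card (coord_space B :: ('b \<Rightarrow> 'k) set) = CARD('k) ^ card B"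
proof -
  have bij: "bij_betw (\<lambda>f. restrict f B) (coord_space B :: ('b \<Rightarrow> 'k) set) (B \<rightarrow>\<^sub>E UNIV)"
    by (rule bij_betw_restrict_coord_space)
  show "finite (coord_space B :: ('b \<Rightarrow> 'k) set)"
    using bij_betw_finite[OF bij] assms by (simp add: finite_PiE)
  show "card (coord_space B :: ('b \<Rightarrow> 'k) set) = CARD('k) ^ card B"
    using bij_betw_same_card[OF bij] assms by (simp add: card_PiE)
qed

lemma zero_in_coord_space: "(\<lambda>_. 0) \<in> coord_space B"
  by (simp add: coord_space_def)

lemma scalar_multiples_subset_coord_space:
  fixes c :: "'b \<Rightarrow> 'k::mult_zero"
  shows "c \<in> coord_space B \<Longrightarrow> scalar_multiples c \<subseteq> coord_space B"
  by (auto simp: coord_space_def scalar_multiples_def)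

lemma dot_scaled_add:
  "dot B (\<lambda>b. e b + t * c b) y = dot B e y + t * dot B c y"
  by (simp add: dot_def algebra_simps sum.distrib sum_distrib_left)

lemma dot_scaled: "dot B (\<lambda>b. t * c b) y = t * dot B c y"
  using dot_scaled_add[of B "\<lambda>_. 0" t c y] by (simp add: dot_def)

lemma dot_split:
  assumes "finite B" "b0 \<in> B"
  shows "dot B c y = c b0 * y b0 + dot (B - {b0}) c y"
  using assms by (simp add: dot_def sum.remove)

lemma zero_in_annihilator: "(\<lambda>_. 0) \<in> annihilator B y"
  by (simp add: annihilator_def zero_in_coord_space dot_def)

lemma scalar_multiples_subset_annihilator:
  fixes c :: "'b \<Rightarrow> 'k::comm_semiring_0"
  shows "c \<in> annihilator B y \<Longrightarrow> scalar_multiples c \<subseteq> annihilator B y"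
  by (auto simp: annihilator_def scalar_multiples_def coord_space_def dot_scaled)

lemma card_annihilator:
  fixes y :: "'b \<Rightarrow> 'k::{field,finite}"
  assumes "finite B" "b0 \<in> B" "y b0 \<noteq> 0"
  shows "card (annihilator B y) = CARD('k) ^ (card B - 1)"
proof -
  define solve where "solve g = g(b0 := - dot (B - {b0}) g y / y b0)" for g :: "'b \<Rightarrow> 'k"
  have dot_upd: "dot (B - {b0}) (g(b0 := a)) y = dot (B - {b0}) g y" for g a
    by (simp add: dot_def)
  have "bij_betw (\<lambda>c. c(b0 := 0)) (annihilator B y) (coord_space (B - {b0}))"
  proof (rule bij_betw_byWitness[where f' = solve])
    show "\<forall>c\<in>annihilator B y. solve (c(b0 := 0)) = c"
    proof
      fix c assume "c \<in> annihilator B y"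
      then have "c b0 = - dot (B - {b0}) c y / y b0"
        using assms by (simp add: annihilator_def dot_split field_simps eq_neg_iff_add_eq_0)
      then show "solve (c(b0 := 0)) = c" by (auto simp: solve_def dot_upd)
    qed
  qed (use assms in \<open>auto simp: annihilator_def solve_def coord_space_def dot_upd dot_split\<close>)
  then show ?thesis
    using assms by (simp add: bij_betw_same_card card_coord_space card_Diff_singleton)
qed

lemma card_scalar_multiples:
  fixes c :: "'b \<Rightarrow> 'k::{field,finite}"
  assumes "c \<noteq> (\<lambda>_. 0)"
  shows "card (scalar_multiples c) = CARD('k)"
proof -
  obtain b0 where "c b0 \<noteq> 0" using assms by auto
  then have "inj (\<lambda>l b. l * c b)" by (auto intro!: injI dest: fun_cong[of _ _ b0])
  then show ?thesis by (simp add: scalar_multiples_def card_image)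
qed

lemma card_independent_pairs:
  fixes K :: "('b \<Rightarrow> 'k::{field,finite}) set"
  assumes "finite K" "(\<lambda>_. 0) \<in> K" "\<And>c. c \<in> K \<Longrightarrow> scalar_multiples c \<subseteq> K"
  shows "card (independent_pairs K) = (card K - 1) * (card K - CARD('k))"
proof -
  have "card (independent_pairs K) = (\<Sum>c\<in>K - {\<lambda>_. 0}. card (K - scalar_multiples c))"
    using assms(1) by (simp add: independent_pairs_def)
  also have "\<dots> = (\<Sum>c\<in>K - {\<lambda>_. 0}. card K - CARD('k))"
  proof (rule sum.cong)
    fix c assume c: "c \<in> K - {\<lambda>_. 0}"
    then have "scalar_multiples c \<subseteq> K" using assms(3) by blast
    then show "card (K - scalar_multiples c) = card K - CARD('k)"
      using c assms(1) by (simp add: card_Diff_subset finite_subset card_scalar_multiples)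
  qed simp
  finally show ?thesis using assms(1,2) by (simp add: card_Diff_singleton)
qed

lemma card_independent_pairs_coord_space:
  assumes "finite B"
  shows "card (independent_pairs (coord_space B :: ('b \<Rightarrow> 'k::{field,finite}) set))
           = (CARD('k) ^ card B - 1) * (CARD('k) ^ card B - CARD('k))"
  using card_independent_pairs[of "coord_space B :: ('b \<Rightarrow> 'k) set", OF finite_coord_space
      zero_in_coord_space scalar_multiples_subset_coord_space] card_coord_space[of B, where 'k='k] assms
  by simp

lemma card_independent_pairs_annihilator:
  fixes y :: "'b \<Rightarrow> 'k::{field,finite}"
  assumes "finite B" "y \<in> coord_space B" "y \<noteq> (\<lambda>_. 0)"
  shows "CARD('k)^2 * card (independent_pairs (annihilator B y))
           \<le> card (independent_pairs (coord_space B :: ('b \<Rightarrow> 'k) set))"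
proof -
  obtain b0 where b0: "b0 \<in> B" "y b0 \<noteq> 0" using assms(2,3) by (auto simp: coord_space_def fun_eq_iff)
  define p where "p = CARD('k)"
  define q where "q = p ^ (card B - 1)"
  have "0 < p" by (simp add: p_def)
  have "card B \<noteq> 0" using b0(1) assms(1) by auto
  then have pq: "p * q = p ^ card B" by (simp add: q_def power_eq_if)
  have "finite (annihilator B y)"
    using finite_coord_space[OF assms(1)] by (rule rev_finite_subset) (auto simp: annihilator_def)
  then have "card (independent_pairs (annihilator B y)) = (q - 1) * (q - p)"
    using card_independent_pairs[of "annihilator B y", OF _ zero_in_annihilator
        scalar_multiples_subset_annihilator]
      card_annihilator[of B b0 y] assms(1) b0 by (simp add: q_def p_def)
  moreover have "card (independent_pairs (coord_space B :: ('b \<Rightarrow> 'k) set)) = (p * q - 1) * (p * q - p)"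
    using card_independent_pairs_coord_space[OF assms(1), where 'k='k] pq by (simp add: p_def)
  moreover have "p^2 * ((q - 1) * (q - p)) \<le> (p * q - 1) * (p * q - p)"
  proof -
    have "p^2 * ((q - 1) * (q - p)) = ((q - 1) * p) * ((q - p) * p)"
      by (simp add: power2_eq_square ac_simps)
    also have "\<dots> = (p * q - p) * (p * q - p * p)"
      by (simp add: diff_mult_distrib mult.commute[of q p])
    also have "\<dots> \<le> (p * q - p) * (p * q - 1)"
      using \<open>0 < p\<close> by (intro mult_le_mono diff_le_mono2) simp_all
    also have "\<dots> = (p * q - 1) * (p * q - p)"
      by (rule mult.commute)
    finally show ?thesis .
  qed
  ultimately show ?thesis by (simp add: p_def)
qed

lemma two_le_card_field: "2 \<le> CARD('k::{field,finite})"
proof -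
  have "card {0, 1 :: 'k} \<le> CARD('k)" by (rule card_mono) auto
  then show ?thesis by simp
qed

lemma pencil_bound:
  fixes S :: "('b \<Rightarrow> 'k::{field,finite}) set"
  assumes "finite S"
    and c: "c \<in> coord_space B" "c \<noteq> (\<lambda>_. 0)" and e: "e \<in> coord_space B" "e \<notin> scalar_multiples c"
    and hyperplane_bound: "\<And>g. g \<in> coord_space B \<Longrightarrow> g \<noteq> (\<lambda>_. 0) \<Longrightarrow> N \<le> card {y \<in> S. dot B g y = 0}"
  shows "(CARD('k) + 1) * N \<le> card S + CARD('k) * card {y \<in> S. dot B c y = 0 \<and> dot B e y = 0}"
proof -
  \<comment> \<open>the p + 1 hyperplanes through the common kernel of c and e\<close>
  define f :: "'k option \<Rightarrow> 'b \<Rightarrow> 'k" where "f = case_option c (\<lambda>t b. e b + t * c b)"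
  have f_nonzero: "f i \<in> coord_space B - {\<lambda>_. 0}" for i
  proof (cases i)
    case (Some t)
    have "e \<noteq> (\<lambda>b. (- t) * c b)" using e(2) unfolding scalar_multiples_def by blast
    then have "(\<lambda>b. e b + t * c b) \<noteq> (\<lambda>_. 0)" by (auto simp: fun_eq_iff eq_neg_iff_add_eq_0)
    then show ?thesis using Some c e by (auto simp: f_def coord_space_def)
  qed (use c in \<open>simp add: f_def\<close>)
  have in_pencil: "card {i. dot B (f i) y = 0} = (if dot B c y = 0 \<and> dot B e y = 0 then CARD('k) + 1 else 1)" for y
  proof -
    consider "dot B c y = 0" "dot B e y = 0" | "dot B c y = 0" "dot B e y \<noteq> 0" | "dot B c y \<noteq> 0"
      by blast
    then show ?thesis
    proof cases
      case 1
      then show ?thesis by (simp add: f_def dot_scaled_add split: option.split)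
    next
      case 2
      then have "{i. dot B (f i) y = 0} = {None}"
        by (auto simp: f_def dot_scaled_add split: option.splits)
      then show ?thesis using 2 by simp
    next
      case 3
      then have "{i. dot B (f i) y = 0} = {Some (- dot B e y / dot B c y)}"
        by (auto simp: f_def dot_scaled_add field_simps eq_neg_iff_add_eq_0 split: option.splits)
      then show ?thesis using 3 by simp
    qed
  qed
  have "(CARD('k) + 1) * N \<le> (\<Sum>i\<in>UNIV. card {y \<in> S. dot B (f i) y = 0})"
    using sum_bounded_below[of UNIV N "\<lambda>i. card {y \<in> S. dot B (f i) y = 0}"]
      hyperplane_bound f_nonzero by simp
  also have "\<dots> = (\<Sum>y\<in>S. if dot B c y = 0 \<and> dot B e y = 0 then CARD('k) + 1 else 1)"
    using assms(1) in_pencil by (intro sum_multicount_gen) auto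
  also have "\<dots> = card S + CARD('k) * card {y \<in> S. dot B c y = 0 \<and> dot B e y = 0}"
    using assms(1) card_Int_Diff[of S "{y. dot B c y = 0 \<and> dot B e y = 0}"]
    by (simp add: sum.If_cases Diff_eq Int_def)
  finally show ?thesis .
qed

lemma sum_sections_independent_pairs:
  fixes S :: "('b \<Rightarrow> 'k::{field,finite}) set"
  assumes "finite B" "S \<subseteq> coord_space B"
  shows "CARD('k)^2 * (\<Sum>q\<in>independent_pairs (coord_space B).
             card {y \<in> S. dot B (fst q) y = 0 \<and> dot B (snd q) y = 0})
           \<le> card (independent_pairs (coord_space B :: ('b \<Rightarrow> 'k) set)) * (CARD('k)^2 + card S)"
proof -
  define P where "P = independent_pairs (coord_space B :: ('b \<Rightarrow> 'k) set)"
  define pairs_at where "pairs_at y = {q \<in> P. dot B (fst q) y = 0 \<and> dot B (snd q) y = 0}" for y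
  have "finite S" using assms finite_coord_space by (blast intro: finite_subset)
  have "finite P"
    using finite_coord_space[OF assms(1)] unfolding P_def independent_pairs_def by blast
  have pairs_at_bound: "CARD('k)^2 * card (pairs_at y) \<le> card P + (if y = (\<lambda>_. 0) then CARD('k)^2 * card P else 0)"
    if "y \<in> S" for y
  proof (cases "y = (\<lambda>_. 0)")
    case True
    have "card (pairs_at y) \<le> card P" using \<open>finite P\<close> by (auto simp: pairs_at_def intro: card_mono)
    then have "CARD('k)^2 * card (pairs_at y) \<le> CARD('k)^2 * card P" by simp
    then show ?thesis using True by (simp add: trans_le_add2)
  next
    case False
    have "pairs_at y = independent_pairs (annihilator B y)"
      by (auto simp: pairs_at_def P_def independent_pairs_def annihilator_def)
    then show ?thesis
      using card_independent_pairs_annihilator[OF assms(1) _ False] that assms(2) False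
      by (auto simp: P_def)
  qed
  have "CARD('k)^2 * (\<Sum>q\<in>P. card {y \<in> S. dot B (fst q) y = 0 \<and> dot B (snd q) y = 0})
      = (\<Sum>y\<in>S. CARD('k)^2 * card (pairs_at y))"
    unfolding sum_distrib_left[symmetric] pairs_at_def
    using \<open>finite P\<close> \<open>finite S\<close> by (intro arg_cong[where f = "(*) _"] sum_multicount_gen) auto
  also have "\<dots> \<le> (\<Sum>y\<in>S. card P + (if y = (\<lambda>_. 0) then CARD('k)^2 * card P else 0))"
    by (rule sum_mono) (rule pairs_at_bound)
  also have "\<dots> \<le> card P * (CARD('k)^2 + card S)"
    using \<open>finite S\<close> by (simp add: sum.distrib sum.delta algebra_simps)
  finally show ?thesis by (simp add: P_def)
qed

lemma coord_space_sections_bound: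
  fixes S :: "('b \<Rightarrow> 'k::{field,finite}) set"
  assumes "finite B" "2 \<le> card B" "S \<subseteq> coord_space B"
    and hyperplane_bound: "\<And>c. c \<in> coord_space B \<Longrightarrow> c \<noteq> (\<lambda>_. 0) \<Longrightarrow>
           CARD('k) * K \<le> card {y \<in> S. dot B c y = 0}"
  shows "CARD('k)^2 * K \<le> card S"
proof -
  define p where "p = CARD('k)"
  define P where "P = independent_pairs (coord_space B :: ('b \<Rightarrow> 'k) set)"
  define on_both where "on_both q = card {y \<in> S. dot B (fst q) y = 0 \<and> dot B (snd q) y = 0}" for q
  have "finite S" using assms finite_coord_space by (blast intro: finite_subset)
  show ?thesis
  proof (cases "\<exists>q\<in>P. on_both q \<le> K")
    case True
    then obtain c e where ce: "(c, e) \<in> P" and small: "on_both (c, e) \<le> K" by auto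
    have "(p + 1) * (p * K) \<le> card S + p * on_both (c, e)"
      using ce pencil_bound[OF \<open>finite S\<close> _ _ _ _ hyperplane_bound, of c e]
      by (simp add: P_def independent_pairs_def on_both_def p_def)
    also have "\<dots> \<le> card S + p * K" using small by simp
    finally show ?thesis by (simp add: p_def power2_eq_square algebra_simps)
  next
    case False
    have "2 \<le> p" unfolding p_def by (rule two_le_card_field)
    then have "p < p ^ 2" by (simp add: power2_eq_square)
    also have "\<dots> \<le> p ^ card B" using \<open>2 \<le> p\<close> assms(2) by (simp add: power_increasing)
    finally have "p < p ^ card B" .
    then have "0 < card P"
      using card_independent_pairs_coord_space[OF assms(1), where 'k='k] \<open>2 \<le> p\<close>
      by (simp add: P_def p_def)
    have "card P * (K + 1) \<le> (\<Sum>q\<in>P. on_both q)"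
      using False sum_bounded_below[of P "K + 1" on_both] by (simp add: not_le Suc_le_eq)
    then have "p^2 * (card P * (K + 1)) \<le> p^2 * (\<Sum>q\<in>P. on_both q)" by simp
    also have "\<dots> \<le> card P * (p^2 + card S)"
      using sum_sections_independent_pairs[OF assms(1,3)] by (simp add: P_def on_both_def p_def)
    finally have "card P * (p^2 * K) \<le> card P * card S"
      by (simp add: algebra_simps)
    then show ?thesis using \<open>0 < card P\<close> by (simp add: p_def)
  qed
qed

context finite_dimensional_vector_space
begin

lemma inj_representation: "inj (representation Basis)"
proof (rule injI)
  fix x y assume "representation Basis x = representation Basis y"
  then show "x = y"
    using sum_representation_eq[OF independent_Basis _ finite_Basis order_refl] span_Basis
    by (metis UNIV_I)
qed

lemma representation_in_coord_space: "representation Basis x \<in> coord_space Basis"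
  using representation_ne_zero by (auto simp: coord_space_def)

lemma dot_representation_add:
  "dot Basis c (representation Basis (x + y))
     = dot Basis c (representation Basis x) + dot Basis c (representation Basis y)"
  by (simp add: representation_add[OF independent_Basis] span_Basis dot_def
      distrib_left sum.distrib)

lemma dot_representation_diff:
  "dot Basis c (representation Basis (x - y))
     = dot Basis c (representation Basis x) - dot Basis c (representation Basis y)"
  by (simp add: representation_diff[OF independent_Basis] span_Basis dot_def
      right_diff_distrib sum_subtractf)

lemma dot_representation_scale:
  "dot Basis c (representation Basis (scale a x)) = a * dot Basis c (representation Basis x)"
  by (simp add: representation_scale[OF independent_Basis] span_Basis dot_def
      sum_distrib_left algebra_simps)

lemma subspace_coord_hyperplane: "subspace {x. dot Basis c (representation Basis x) = 0}"
  unfolding subspace_def by (simp add: dot_representation_add dot_representation_scale)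
    (simp add: representation_zero dot_def)

lemma dim_coord_hyperplane:
  assumes "c \<in> coord_space Basis" "c \<noteq> (\<lambda>_. 0)"
  shows "dim {x. dot Basis c (representation Basis x) = 0} = card Basis - 1"
proof -
  define \<phi> where "\<phi> x = dot Basis c (representation Basis x)" for x
  define H where "H = {x. \<phi> x = 0}"
  obtain b0 where b0: "c b0 \<noteq> 0" using assms(2) by auto
  then have "b0 \<in> Basis" using assms(1) by (auto simp: coord_space_def)
  then have "\<phi> b0 = c b0"
    using finite_Basis by (simp add: \<phi>_def dot_def representation_basis[OF independent_Basis] if_distrib
      cong: if_cong)
  have "subspace H" using subspace_coord_hyperplane by (simp add: H_def \<phi>_def)
  moreover have "b0 \<notin> H" using \<open>\<phi> b0 = c b0\<close> b0 by (simp add: H_def)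
  ultimately have "b0 \<notin> span H" by (metis span_eq_iff)
  have "x \<in> span (insert b0 H)" for x
  proof -
    define t where "t = \<phi> x / \<phi> b0"
    have "x - scale t b0 \<in> H"
      using \<open>\<phi> b0 = c b0\<close> b0
      by (simp add: H_def \<phi>_def dot_representation_diff dot_representation_scale t_def)
    then have "(x - scale t b0) + scale t b0 \<in> span (insert b0 H)"
      by (intro span_add) (auto intro: span_base span_scale)
    then show ?thesis by simp
  qed
  then have "card Basis = dim (insert b0 H)"
    by (metis dim_UNIV dim_span subsetI subset_antisym subset_UNIV)
  also have "\<dots> = dim H + 1" using \<open>b0 \<notin> span H\<close> by (simp add: dim_insert)
  finally show ?thesis by (simp add: H_def \<phi>_def)
qed

end

lemma hyperplane_sections_bound:
  fixes scale :: "'k::{field,finite} \<Rightarrow> 'v::ab_group_add \<Rightarrow> 'v" and S :: "'v set"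
  assumes "finite_dimensional_vector_space scale B" "2 \<le> card B"
    and hyperplane_bound: "\<And>H. module.subspace scale H \<Longrightarrow> vector_space.dim scale H = card B - 1 \<Longrightarrow>
           CARD('k) * K \<le> card (S \<inter> H)"
  shows "CARD('k)^2 * K \<le> card S"
proof -
  interpret finite_dimensional_vector_space scale B by fact
  let ?R = "representation B"
  have "CARD('k)^2 * K \<le> card (?R ` S)"
  proof (rule coord_space_sections_bound[OF finite_Basis assms(2)])
    show "?R ` S \<subseteq> coord_space B" using representation_in_coord_space by auto
    fix c :: "'v \<Rightarrow> 'k" assume c: "c \<in> coord_space B" "c \<noteq> (\<lambda>_. 0)"
    let ?H = "{x. dot B c (?R x) = 0}"
    have "{y \<in> ?R ` S. dot B c y = 0} = ?R ` (S \<inter> ?H)" by auto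
    then have "card {y \<in> ?R ` S. dot B c y = 0} = card (S \<inter> ?H)"
      using inj_representation by (simp add: card_image inj_on_subset)
    then show "CARD('k) * K \<le> card {y \<in> ?R ` S. dot B c y = 0}"
      using hyperplane_bound[OF subspace_coord_hyperplane dim_coord_hyperplane[OF c]] by simp
  qed
  then show ?thesis using inj_representation by (simp add: card_image inj_on_subset)
qed

theorem mainTheorem8:
  fixes scale :: "'k::{field,finite} \<Rightarrow> 'v::ab_group_add \<Rightarrow> 'v"
    and p d :: nat and m :: int and S :: "'v set"
  assumes "prime p"
    and "CARD('k) = p"
    and "vector_space scale"
    and "vector_space.dim scale (UNIV :: 'v set) = d"
    and "d \<ge> 3"
    and "\<And>H. module.subspace scale H \<Longrightarrow> vector_space.dim scale H = d - 1 \<Longrightarrow>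
           int (card (S \<inter> H)) \<ge> m * int p ^ (d - 2)"
  shows "int (card S) \<ge> m * int p ^ (d - 1)"
proof (cases "m < 0")
  case True
  then have "m * int p ^ (d - 1) \<le> 0" by (simp add: mult_nonpos_nonneg)
  then show ?thesis by simp
next
  case False
  then obtain n where m: "m = int n" by (metis nonneg_int_cases not_less)
  interpret vector_space scale by fact
  obtain B where B: "independent B" "UNIV \<subseteq> span B" "card B = d"
    using basis_exists[of UNIV] assms(4) by auto
  have "finite B" using B(3) assms(5) card.infinite by fastforce
  obtain j where d: "d = j + 3" using assms(5) by (metis add.commute le_Suc_ex)
  have scaled: "int (CARD('k) * (n * p ^ (d - 3))) = m * int p ^ (d - 2)"
    "int (CARD('k)^2 * (n * p ^ (d - 3))) = m * int p ^ (d - 1)"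
    by (simp_all add: assms(2) m d power2_eq_square numeral_3_eq_3)
  have "CARD('k)^2 * (n * p ^ (d - 3)) \<le> card S"
  proof (rule hyperplane_sections_bound)
    show "finite_dimensional_vector_space scale B"
      using \<open>finite B\<close> B by unfold_locales auto
    show "2 \<le> card B" using B(3) assms(5) by simp
    fix H assume "subspace H" "dim H = card B - 1"
    then have "int (CARD('k) * (n * p ^ (d - 3))) \<le> int (card (S \<inter> H))"
      unfolding scaled(1) using assms(6) B(3) by simp
    then show "CARD('k) * (n * p ^ (d - 3)) \<le> card (S \<inter> H)"
      by (simp only: of_nat_le_iff)
  qed
  then have "int (CARD('k)^2 * (n * p ^ (d - 3))) \<le> int (card S)"
    by (simp only: of_nat_le_iff)
  then show ?thesis by (simp only: scaled(2))
qed

end
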